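(* Let $V$ be a finite nonempty set of voters, $A$ a finite set of alternatives, $A=B\uplus C$ a partition, and $G:\mathcal{P}(V,B)\to B$, $H:\mathcal{P}(V,C)\to C$ social choice functions. Let $F:\mathcal{P}(V,A)\to S_2(A)$ be the consular election rule $F(P)=\{G(P|_B),H(P|_C)\}$. Then $F$ satisfies SPP and SPO if and only if $G$ and $H$ are strategy-proof.
   Context: A profile over a set $X$ of alternatives assigns to each voter $i\in V$ a linear order on $X$; $\mathcal{P}(V,X)$ is the set of profiles; $P|_B$ is the profile of restrictions to $B$; $P_i'P_{-i}$ replaces voter $i$'s order by $P_i'$. A social choice function $G:\mathcal{P}(V,B)\to B$ is strategy-proof if for every profile $Q$, voter $i$ and linear order $Q_i'$ on $B$, $G(Q)\succeq_i G(Q_i'Q_{-i})$ in the order $Q_i$. $S_2(A)$ is the set of 2-element subsets of $A$. For a consular election rule $F:\mathcal{P}(V,A)\to S_2(A)$: SPO means that for all $P$, $i$, $P_i'$, $\mathrm{best}(P_i,F(P))\succeq_i\mathrm{best}(P_i,F(P_i'P_{-i}))$; SPP means the same with $\mathrm{worst}$, where $\mathrm{best}(P_i,W)$, $\mathrm{worst}(P_i,W)$ are the $P_i$-best and $P_i$-worst elements of $W$. *)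

theory Defs
  imports Main "HOL-Library.FuncSet"
begin

text \<open>A linear order on X is a relation R with (x,y) in R meaning "x is weakly preferred to y".
  Profiles are extensional functions from voters V to linear orders on X.\<close>

definition profiles :: "'v set \<Rightarrow> 'a set \<Rightarrow> ('v \<Rightarrow> 'a rel) set" where
  "profiles V X = (V \<rightarrow>\<^sub>E {R. linear_order_on X R})"

definition restr_prof :: "'v set \<Rightarrow> 'a set \<Rightarrow> ('v \<Rightarrow> 'a rel) \<Rightarrow> ('v \<Rightarrow> 'a rel)" where
  "restr_prof V B P = restrict (\<lambda>i. P i \<inter> (B \<times> B)) V"

definition best :: "'a rel \<Rightarrow> 'a set \<Rightarrow> 'a" where
  "best R W = (THE x. x \<in> W \<and> (\<forall>y\<in>W. (x, y) \<in> R))"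

definition worst :: "'a rel \<Rightarrow> 'a set \<Rightarrow> 'a" where
  "worst R W = (THE x. x \<in> W \<and> (\<forall>y\<in>W. (y, x) \<in> R))"

definition strategy_proof :: "'v set \<Rightarrow> 'a set \<Rightarrow> (('v \<Rightarrow> 'a rel) \<Rightarrow> 'a) \<Rightarrow> bool" where
  "strategy_proof V B G \<longleftrightarrow>
     (\<forall>Q\<in>profiles V B. \<forall>i\<in>V. \<forall>R'. linear_order_on B R' \<longrightarrow>
        (G Q, G (Q(i := R'))) \<in> Q i)"

definition SPO :: "'v set \<Rightarrow> 'a set \<Rightarrow> (('v \<Rightarrow> 'a rel) \<Rightarrow> 'a set) \<Rightarrow> bool" where
  "SPO V A F \<longleftrightarrow>
     (\<forall>P\<in>profiles V A. \<forall>i\<in>V. \<forall>R'. linear_order_on A R' \<longrightarrow>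
        (best (P i) (F P), best (P i) (F (P(i := R')))) \<in> P i)"

definition SPP :: "'v set \<Rightarrow> 'a set \<Rightarrow> (('v \<Rightarrow> 'a rel) \<Rightarrow> 'a set) \<Rightarrow> bool" where
  "SPP V A F \<longleftrightarrow>
     (\<forall>P\<in>profiles V A. \<forall>i\<in>V. \<forall>R'. linear_order_on A R' \<longrightarrow>
        (worst (P i) (F P), worst (P i) (F (P(i := R')))) \<in> P i)"

end

theory Submission
  imports Defs
begin

text \<open>If G and H are strategy-proof, a deviating voter can only move each of the two consuls
  weakly down in her own order, and both the best and the worst element of a pair are monotone in
  its two components; this gives SPO and SPP. Conversely, extend a profile on B to A by letting
  every voter rank all of B above all of C. Then every voter's best consul is the one chosen by G,
  so SPO of F is strategy-proofness of G, and symmetrically for H.\<close>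

lemma ex_linear_order_on: "\<exists>R. linear_order_on A R"
  using card_of_well_order_on unfolding well_order_on_def by blast

lemma linear_order_on_Int_Times:
  assumes "linear_order_on A R" and "B \<subseteq> A"
  shows "linear_order_on B (R \<inter> B \<times> B)"
  using assms unfolding order_on_defs
  by (auto simp: refl_on_def trans_def antisym_def total_on_def) (use assms(2) in blast)

lemma linear_order_on_ordinal_sum:
  assumes "linear_order_on X R" and "linear_order_on Y S" and "X \<inter> Y = {}"
  shows "linear_order_on (X \<union> Y) (R \<union> X \<times> Y \<union> S)"
proof -
  have R: "R \<subseteq> X \<times> X" "refl_on X R" "trans R" "antisym R" "total_on X R"
    and S: "S \<subseteq> Y \<times> Y" "refl_on Y S" "trans S" "antisym S" "total_on Y S"
    using assms(1,2) by (simp_all add: order_on_defs)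
  have "trans (R \<union> X \<times> Y \<union> S)"
    using R(1,3) S(1,3) assms(3) unfolding trans_def by blast
  moreover have "antisym (R \<union> X \<times> Y \<union> S)"
    using R(1,4) S(1,4) assms(3) unfolding antisym_def by blast
  moreover have "total_on (X \<union> Y) (R \<union> X \<times> Y \<union> S)"
    using R(5) S(5) unfolding total_on_def by blast
  ultimately show ?thesis
    using R(1,2) S(1,2) unfolding order_on_defs refl_on_def by blast
qed

lemma ordinal_sum_Int_Times_left:
  assumes "linear_order_on X R" and "linear_order_on Y S" and "X \<inter> Y = {}"
  shows "(R \<union> X \<times> Y \<union> S) \<inter> X \<times> X = R"
  using assms by (auto simp: order_on_defs)

lemma worst_eq_best_converse: "worst R W = best (R\<inverse>) W"
  unfolding worst_def best_def by simp

lemma best_doubleton_eq: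
  assumes "linear_order_on A R" and "x \<in> A" and "(x, y) \<in> R"
  shows "best R {x, y} = x"
  unfolding best_def
proof (rule the_equality)
  show "x \<in> {x, y} \<and> (\<forall>z\<in>{x, y}. (x, z) \<in> R)"
    using assms by (auto simp: order_on_defs refl_on_def)
  show "z = x" if "z \<in> {x, y} \<and> (\<forall>w\<in>{x, y}. (z, w) \<in> R)" for z
    using that assms(1,3) by (auto simp: order_on_defs antisym_def)
qed

lemma best_doubleton_le:
  assumes "linear_order_on A R" and "x \<in> A" and "y \<in> A"
  shows "best R {x, y} \<in> {x, y}" and "(best R {x, y}, x) \<in> R" and "(best R {x, y}, y) \<in> R"
proof -
  have refl: "(x, x) \<in> R" "(y, y) \<in> R"
    using assms by (auto simp: order_on_defs refl_on_def)
  then have "(x, y) \<in> R \<or> (y, x) \<in> R"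
    using assms unfolding order_on_defs total_on_def by (cases "x = y") auto
  then have "best R {x, y} = x \<and> (x, y) \<in> R \<or> best R {x, y} = y \<and> (y, x) \<in> R"
    using best_doubleton_eq[OF assms(1)] assms(2,3) by (metis insert_commute)
  then show "best R {x, y} \<in> {x, y}" "(best R {x, y}, x) \<in> R" "(best R {x, y}, y) \<in> R"
    using refl by auto
qed

lemma best_doubleton_mono:
  assumes lin: "linear_order_on A R" and "b \<in> A" "c \<in> A" "b' \<in> A" "c' \<in> A"
    and "(b, b') \<in> R" "(c, c') \<in> R"
  shows "(best R {b, c}, best R {b', c'}) \<in> R"
proof -
  have "trans R"
    using lin by (simp add: order_on_defs)
  then have "(best R {b, c}, b') \<in> R" "(best R {b, c}, c') \<in> R"
    using best_doubleton_le(2,3)[OF lin \<open>b \<in> A\<close> \<open>c \<in> A\<close>] assms(6,7) by (blast dest: transD)+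
  then show ?thesis
    using best_doubleton_le(1)[OF lin \<open>b' \<in> A\<close> \<open>c' \<in> A\<close>] by auto
qed

lemma worst_doubleton_mono:
  assumes "linear_order_on A R" and "b \<in> A" "c \<in> A" "b' \<in> A" "c' \<in> A"
    and "(b, b') \<in> R" "(c, c') \<in> R"
  shows "(worst R {b, c}, worst R {b', c'}) \<in> R"
  using best_doubleton_mono[of A "R\<inverse>" b' c' b c] assms by (simp add: worst_eq_best_converse)

lemma fun_upd_in_profiles:
  "P \<in> profiles V A \<Longrightarrow> i \<in> V \<Longrightarrow> linear_order_on A R \<Longrightarrow> P(i := R) \<in> profiles V A"
  by (auto simp: profiles_def PiE_iff extensional_def)

lemma restr_prof_in_profiles:
  "P \<in> profiles V A \<Longrightarrow> B \<subseteq> A \<Longrightarrow> restr_prof V B P \<in> profiles V B"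
  by (auto simp: profiles_def restr_prof_def PiE_iff intro: linear_order_on_Int_Times)

lemma restr_prof_fun_upd:
  "i \<in> V \<Longrightarrow> restr_prof V B (P(i := R)) = (restr_prof V B P)(i := R \<inter> B \<times> B)"
  by (auto simp: restr_prof_def fun_eq_iff)

lemma profiles_ordinal_sum:
  assumes Q: "Q \<in> profiles V X" and L: "linear_order_on Y L" and disj: "X \<inter> Y = {}"
  shows "(\<lambda>j\<in>V. Q j \<union> X \<times> Y \<union> L) \<in> profiles V (X \<union> Y)"
    and "restr_prof V X (\<lambda>j\<in>V. Q j \<union> X \<times> Y \<union> L) = Q"
proof -
  have lin: "linear_order_on X (Q j)" if "j \<in> V" for j
    using Q that by (auto simp: profiles_def)
  show "(\<lambda>j\<in>V. Q j \<union> X \<times> Y \<union> L) \<in> profiles V (X \<union> Y)"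
    using linear_order_on_ordinal_sum[OF lin L disj] by (simp add: profiles_def)
  have "Q \<in> extensional V"
    using Q by (simp add: profiles_def PiE_def)
  then show "restr_prof V X (\<lambda>j\<in>V. Q j \<union> X \<times> Y \<union> L) = Q"
    using ordinal_sum_Int_Times_left[OF lin L disj]
    by (auto simp: restr_prof_def fun_eq_iff extensional_def)
qed

lemma strategy_proof_restr_prof:
  assumes "strategy_proof V B G" and "B \<subseteq> A"
    and "P \<in> profiles V A" and "i \<in> V" and "linear_order_on A R"
  shows "(G (restr_prof V B P), G (restr_prof V B (P(i := R)))) \<in> P i"
proof -
  have "(G (restr_prof V B P), G ((restr_prof V B P)(i := R \<inter> B \<times> B))) \<in> restr_prof V B P i"
    using assms restr_prof_in_profiles linear_order_on_Int_Times
    unfolding strategy_proof_def by blast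
  moreover have "restr_prof V B P i = P i \<inter> B \<times> B"
    using assms(4) by (simp add: restr_prof_def)
  ultimately show ?thesis
    using assms(4) by (simp add: restr_prof_fun_upd)
qed

lemma SPO_SPP_if_strategy_proof:
  assumes "B \<subseteq> A" and "C \<subseteq> A"
    and G: "G \<in> profiles V B \<rightarrow> B" and H: "H \<in> profiles V C \<rightarrow> C"
    and F: "\<forall>P\<in>profiles V A. F P = {G (restr_prof V B P), H (restr_prof V C P)}"
    and "strategy_proof V B G" and "strategy_proof V C H"
  shows "SPO V A F" and "SPP V A F"
proof -
  have "(best (P i) (F P), best (P i) (F (P(i := R)))) \<in> P i \<and>
        (worst (P i) (F P), worst (P i) (F (P(i := R)))) \<in> P i"
    if P: "P \<in> profiles V A" and i: "i \<in> V" and R: "linear_order_on A R" for P i R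
  proof -
    have P': "P(i := R) \<in> profiles V A"
      using fun_upd_in_profiles[OF P i R] .
    have lin: "linear_order_on A (P i)"
      using P i by (auto simp: profiles_def)
    have in_A: "G (restr_prof V B P) \<in> A" "H (restr_prof V C P) \<in> A"
      "G (restr_prof V B (P(i := R))) \<in> A" "H (restr_prof V C (P(i := R))) \<in> A"
      using funcset_mem[OF G restr_prof_in_profiles] funcset_mem[OF H restr_prof_in_profiles]
        P P' assms(1,2) by blast+
    have "(G (restr_prof V B P), G (restr_prof V B (P(i := R)))) \<in> P i"
      "(H (restr_prof V C P), H (restr_prof V C (P(i := R)))) \<in> P i"
      using strategy_proof_restr_prof[OF assms(6,1) P i R]
        strategy_proof_restr_prof[OF assms(7,2) P i R] .
    moreover have "F P = {G (restr_prof V B P), H (restr_prof V C P)}"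
      "F (P(i := R)) = {G (restr_prof V B (P(i := R))), H (restr_prof V C (P(i := R)))}"
      using F P P' by blast+
    ultimately show ?thesis
      using best_doubleton_mono[OF lin in_A] worst_doubleton_mono[OF lin in_A] by simp
  qed
  then show "SPO V A F" and "SPP V A F"
    unfolding SPO_def SPP_def by blast+
qed

lemma strategy_proof_if_SPO:
  assumes A: "A = X \<union> Y" and disj: "X \<inter> Y = {}"
    and G: "G \<in> profiles V X \<rightarrow> X" and H: "H \<in> profiles V Y \<rightarrow> Y"
    and F: "\<forall>P\<in>profiles V A. F P = {G (restr_prof V X P), H (restr_prof V Y P)}"
    and SPO: "SPO V A F"
  shows "strategy_proof V X G"
  unfolding strategy_proof_def
proof (intro ballI allI impI)
  fix Q i R
  assume Q: "Q \<in> profiles V X" and i: "i \<in> V" and R: "linear_order_on X R"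
  obtain L where L: "linear_order_on Y L"
    using ex_linear_order_on by blast
  define lift where "lift Q = (\<lambda>j\<in>V. Q j \<union> X \<times> Y \<union> L)" for Q
  have lift_in_profiles: "lift Q \<in> profiles V A" and restr_lift: "restr_prof V X (lift Q) = Q"
    if "Q \<in> profiles V X" for Q
    using profiles_ordinal_sum[OF that L disj] A unfolding lift_def by simp_all
  have Q': "Q(i := R) \<in> profiles V X"
    using fun_upd_in_profiles[OF Q i R] .
  have lin: "linear_order_on A (lift Q i)"
    using lift_in_profiles[OF Q] i by (auto simp: profiles_def)
  have best_lift: "best (lift Q i) (F (lift Q0)) = G Q0" if Q0: "Q0 \<in> profiles V X" for Q0
  proof -
    have "G Q0 \<in> X"
      using G Q0 by blast
    moreover have "H (restr_prof V Y (lift Q0)) \<in> Y"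
      using funcset_mem[OF H restr_prof_in_profiles[OF lift_in_profiles[OF Q0]]] A by blast
    moreover have "F (lift Q0) = {G Q0, H (restr_prof V Y (lift Q0))}"
      using F lift_in_profiles[OF Q0] restr_lift[OF Q0] by simp
    ultimately show ?thesis
      using best_doubleton_eq[OF lin] i A by (simp add: lift_def)
  qed
  have "(lift Q)(i := R \<union> X \<times> Y \<union> L) = lift (Q(i := R))"
    using i by (auto simp: lift_def fun_eq_iff)
  moreover have "(best (lift Q i) (F (lift Q)),
      best (lift Q i) (F ((lift Q)(i := R \<union> X \<times> Y \<union> L)))) \<in> lift Q i"
    using SPO lift_in_profiles[OF Q] i linear_order_on_ordinal_sum[OF R L disj] A
    unfolding SPO_def by blast
  ultimately have "(G Q, G (Q(i := R))) \<in> lift Q i \<inter> X \<times> X"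
    using best_lift[OF Q] best_lift[OF Q'] funcset_mem[OF G Q] funcset_mem[OF G Q'] by simp
  moreover have "lift Q i \<inter> X \<times> X = Q i"
    using fun_cong[OF restr_lift[OF Q], of i] i by (simp add: restr_prof_def)
  ultimately show "(G Q, G (Q(i := R))) \<in> Q i"
    by simp
qed

theorem proposition21:
  fixes V :: "'v set" and A B C :: "'a set"
    and G H :: "('v \<Rightarrow> 'a rel) \<Rightarrow> 'a"
    and F :: "('v \<Rightarrow> 'a rel) \<Rightarrow> 'a set"
  assumes "finite V" and "V \<noteq> {}" and "finite A"
    and "A = B \<union> C" and "B \<inter> C = {}"
    and "G \<in> profiles V B \<rightarrow> B" and "H \<in> profiles V C \<rightarrow> C"
    and "\<forall>P\<in>profiles V A. F P = {G (restr_prof V B P), H (restr_prof V C P)}"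
  shows "(SPP V A F \<and> SPO V A F) \<longleftrightarrow> (strategy_proof V B G \<and> strategy_proof V C H)"
proof
  assume "SPP V A F \<and> SPO V A F"
  then have SPO: "SPO V A F" ..
  have "A = C \<union> B" and "C \<inter> B = {}"
    and "\<forall>P\<in>profiles V A. F P = {H (restr_prof V C P), G (restr_prof V B P)}"
    using assms(4,5,8) by (auto simp: insert_commute)
  then show "strategy_proof V B G \<and> strategy_proof V C H"
    using strategy_proof_if_SPO[OF assms(4-8) SPO] strategy_proof_if_SPO[OF _ _ assms(7,6) _ SPO]
    by simp
next
  assume "strategy_proof V B G \<and> strategy_proof V C H"
  moreover have "B \<subseteq> A" and "C \<subseteq> A"
    using assms(4) by auto
  ultimately show "SPP V A F \<and> SPO V A F"
    using SPO_SPP_if_strategy_proof[OF _ _ assms(6-8)] by simp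
qed

end
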